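(* Let $0\le s<n$, $A\in M_{s+1,n-s}$, and $\mathcal L=\{(x,\tilde xA)\mid x\in\mathbb R^s\}\subset\mathbb R^n$ with $\tilde x=(1,x)$. Then for every $v<\omega(A)$ there exists an infinite subset $\mathcal A\subset\mathbb Z\times\mathbb Z^n$ such that for every $y\in\mathcal L$, the inequality $|yq+p|<\|q\|^{-v}$ holds for all but finitely many $(p,q)\in\mathcal A$.
   Context: $yq=\sum_{i=1}^ny_iq_i$ for the row vector $y$ and $q\in\mathbb Z^n$. $\omega(A)$ is the supremum of $u>0$ for which there are infinitely many $q\in\mathbb Z^{n-s}$ with $\|Aq+p\|<\|q\|^{-u}$ for some $p\in\mathbb Z^{s+1}$. *)

theory Defs
  imports Complex_Main "HOL-Library.Extended_Real"
begin

text \<open>Vectors in R^k / Z^k are modelled as functions on nat, with coordinates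
  0..k-1 (indices outside are irrelevant / forced to be 0 where needed).
  Matrices in M_{a,b} are functions nat => nat => real, rows < a, columns < b.\<close>

definition supnorm :: "nat \<Rightarrow> (nat \<Rightarrow> real) \<Rightarrow> real" where
  "supnorm k x = (MAX i\<in>{..<k}. \<bar>x i\<bar>)"

definition supp_in :: "nat \<Rightarrow> (nat \<Rightarrow> 'a::zero) \<Rightarrow> bool" where
  "supp_in k x \<longleftrightarrow> (\<forall>i\<ge>k. x i = 0)"

definition matvec :: "nat \<Rightarrow> nat \<Rightarrow> (nat \<Rightarrow> nat \<Rightarrow> real) \<Rightarrow> (nat \<Rightarrow> int) \<Rightarrow> nat \<Rightarrow> real" where
  "matvec s n A q = (\<lambda>i. \<Sum>j<n - s. A i j * real_of_int (q j))"

definition omega :: "nat \<Rightarrow> nat \<Rightarrow> (nat \<Rightarrow> nat \<Rightarrow> real) \<Rightarrow> ereal" where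
  "omega s n A = Sup {ereal u | u. u > 0 \<and>
     infinite {q :: nat \<Rightarrow> int. supp_in (n - s) q \<and>
       (\<exists>p :: nat \<Rightarrow> int. supp_in (s + 1) p \<and>
          supnorm (s + 1) (\<lambda>i. matvec s n A q i + real_of_int (p i))
            < supnorm (n - s) (\<lambda>j. real_of_int (q j)) powr (- u))}}"

definition Lspace :: "nat \<Rightarrow> nat \<Rightarrow> (nat \<Rightarrow> nat \<Rightarrow> real) \<Rightarrow> (nat \<Rightarrow> real) set" where
  "Lspace s n A = {y. \<exists>x :: nat \<Rightarrow> real.
      (\<forall>i<s. y i = x i) \<and>
      (\<forall>j<n - s. y (s + j) = A 0 j + (\<Sum>i<s. x i * A (i + 1) j)) \<and>
      (\<forall>i\<ge>n. y i = 0)}"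

definition dotp :: "nat \<Rightarrow> (nat \<Rightarrow> real) \<Rightarrow> (nat \<Rightarrow> int) \<Rightarrow> real" where
  "dotp n y q = (\<Sum>i<n. y i * real_of_int (q i))"

end

theory Submission
  imports Defs
begin

text \<open>Take \<open>v < u < \<omega>(A)\<close> and infinitely many \<open>(p, q)\<close> with \<open>\<parallel>Aq + p\<parallel> < \<parallel>q\<parallel>\<^sup>-\<^sup>u\<close>, and
  replace \<open>(p, q)\<close> by \<open>(p\<^sub>0, Q)\<close> with \<open>Q = (p\<^sub>1, \<dots>, p\<^sub>s, q)\<close>. For \<open>y = (x, x\<^sup>~A)\<close> one has
  \<open>yQ + p\<^sub>0 = x\<^sup>~(Aq + p)\<close>, so \<open>\<bar>yQ + p\<^sub>0\<bar> \<le> C\<^sub>x \<parallel>q\<parallel>\<^sup>-\<^sup>u\<close>, while \<open>\<parallel>q\<parallel> \<le> \<parallel>Q\<parallel> \<le> K \<parallel>q\<parallel>\<close>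
  with \<open>K\<close> depending only on \<open>A\<close>. Since \<open>u > v\<close>, this is below \<open>\<parallel>Q\<parallel>\<^sup>-\<^sup>v\<close> as soon as
  \<open>\<parallel>q\<parallel>\<close> is large, which excludes only finitely many \<open>q\<close>.\<close>

lemma abs_le_supnorm: "i < k \<Longrightarrow> \<bar>x i\<bar> \<le> supnorm k x"
  unfolding supnorm_def by (rule Max_ge) auto

lemma supnorm_le: "0 < k \<Longrightarrow> (\<And>i. i < k \<Longrightarrow> \<bar>x i\<bar> \<le> R) \<Longrightarrow> supnorm k x \<le> R"
  unfolding supnorm_def by (subst Max_le_iff) auto

lemma finite_supp_in_supnorm_le:
  "finite {q :: nat \<Rightarrow> int. supp_in m q \<and> supnorm m (\<lambda>i. real_of_int (q i)) \<le> R}"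
proof (rule finite_subset)
  show "finite {q. \<forall>i. (i \<in> {..<m} \<longrightarrow> q i \<in> {-\<lceil>R\<rceil>..\<lceil>R\<rceil>}) \<and> (i \<notin> {..<m} \<longrightarrow> q i = 0)}"
    by (rule finite_set_of_finite_funs) simp_all
  show "{q. supp_in m q \<and> supnorm m (\<lambda>i. real_of_int (q i)) \<le> R}
      \<subseteq> {q. \<forall>i. (i \<in> {..<m} \<longrightarrow> q i \<in> {-\<lceil>R\<rceil>..\<lceil>R\<rceil>}) \<and> (i \<notin> {..<m} \<longrightarrow> q i = 0)}"
  proof (clarsimp simp: supp_in_def)
    fix q :: "nat \<Rightarrow> int" and i
    assume "supnorm m (\<lambda>i. real_of_int (q i)) \<le> R" and "i < m"
    then have "\<bar>real_of_int (q i)\<bar> \<le> R"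
      using abs_le_supnorm[of i m "\<lambda>i. real_of_int (q i)"] by simp
    then show "- \<lceil>R\<rceil> \<le> q i \<and> q i \<le> \<lceil>R\<rceil>" by linarith
  qed
qed

lemma abs_matvec_le:
  "\<bar>matvec s n A q i\<bar> \<le> (\<Sum>j<n - s. \<bar>A i j\<bar>) * supnorm (n - s) (\<lambda>j. real_of_int (q j))"
proof -
  have "\<bar>matvec s n A q i\<bar> \<le> (\<Sum>j<n - s. \<bar>A i j * real_of_int (q j)\<bar>)"
    unfolding matvec_def by (rule sum_abs)
  also have "\<dots> \<le> (\<Sum>j<n - s. \<bar>A i j\<bar> * supnorm (n - s) (\<lambda>j. real_of_int (q j)))"
    by (intro sum_mono) (auto simp: abs_mult intro!: mult_left_mono abs_le_supnorm)
  finally show ?thesis by (simp add: sum_distrib_right)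
qed

lemma sum_lessThan_add_split:
  fixes s m :: nat
  shows "(\<Sum>i<s + m. f i) = (\<Sum>i<s. f i) + (\<Sum>j<m. f (s + j))"
  by (induction m) (simp_all add: add.assoc)

lemma abs_affine_le_supnorm:
  fixes e x :: "nat \<Rightarrow> real"
  shows "\<bar>e 0 + (\<Sum>i<s. x i * e (Suc i))\<bar> \<le> (1 + (\<Sum>i<s. \<bar>x i\<bar>)) * supnorm (s + 1) e"
proof -
  have "\<bar>\<Sum>i<s. x i * e (Suc i)\<bar> \<le> (\<Sum>i<s. \<bar>x i\<bar> * \<bar>e (Suc i)\<bar>)"
    using sum_abs[of "\<lambda>i. x i * e (Suc i)" "{..<s}"] by (simp add: abs_mult)
  then have "\<bar>e 0 + (\<Sum>i<s. x i * e (Suc i))\<bar> \<le> \<bar>e 0\<bar> + (\<Sum>i<s. \<bar>x i\<bar> * \<bar>e (Suc i)\<bar>)"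
    using abs_triangle_ineq[of "e 0" "\<Sum>i<s. x i * e (Suc i)"] by linarith
  also have "\<dots> \<le> supnorm (s + 1) e + (\<Sum>i<s. \<bar>x i\<bar> * supnorm (s + 1) e)"
    by (intro add_mono sum_mono mult_left_mono) (auto intro: abs_le_supnorm)
  finally show ?thesis by (simp add: sum_distrib_right distrib_right)
qed

lemma powr_neg_ge_between:
  fixes K N M v :: real
  assumes "1 \<le> K" "0 < N" "N \<le> M" "M \<le> K * N"
  shows "K powr - \<bar>v\<bar> * N powr - v \<le> M powr - v"
proof (cases "0 \<le> v")
  case True
  have "K powr - \<bar>v\<bar> * N powr - v = (K * N) powr - v"
    using True by (simp add: powr_mult)
  also have "\<dots> \<le> M powr - v"
    using assms True by (intro powr_mono2') auto
  finally show ?thesis .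
next
  case False
  have "K powr - \<bar>v\<bar> \<le> 1"
    using powr_mono[of "- \<bar>v\<bar>" 0 K] assms by simp
  then have "K powr - \<bar>v\<bar> * N powr - v \<le> N powr - v"
    by (intro mult_left_le_one_le) auto
  also have "\<dots> \<le> M powr - v"
    using assms False by (intro powr_mono2) auto
  finally show ?thesis .
qed

lemma mult_powr_neg_le_between:
  fixes c K N M u v :: real
  assumes "1 \<le> K" "0 < N" "N \<le> M" "M \<le> K * N"
    and "c * K powr \<bar>v\<bar> \<le> N powr (u - v)"
  shows "c * N powr - u \<le> M powr - v"
proof -
  have "c * N powr - u = K powr - \<bar>v\<bar> * (c * K powr \<bar>v\<bar>) * N powr - u"
    using \<open>1 \<le> K\<close> by (simp add: powr_minus field_simps)
  also have "\<dots> \<le> K powr - \<bar>v\<bar> * N powr (u - v) * N powr - u"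
    using assms(5) by (intro mult_right_mono mult_left_mono) auto
  also have "\<dots> = K powr - \<bar>v\<bar> * N powr - v"
    using \<open>0 < N\<close> by (simp add: powr_add[symmetric])
  also have "\<dots> \<le> M powr - v"
    using assms(1-4) by (rule powr_neg_ge_between)
  finally show ?thesis .
qed

lemma ex_threshold_le_powr:
  fixes c d :: real
  assumes "0 < d"
  shows "\<exists>R\<ge>1. \<forall>N\<ge>R. c \<le> N powr d"
proof (intro exI[of _ "max 1 (\<bar>c\<bar> powr (1 / d))"] conjI allI impI)
  fix N assume N: "max 1 (\<bar>c\<bar> powr (1 / d)) \<le> N"
  have "c \<le> (\<bar>c\<bar> powr (1 / d)) powr d"
    using assms by (simp add: powr_powr)
  also have "\<dots> \<le> N powr d"
    using N assms by (intro powr_mono2) auto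
  finally show "c \<le> N powr d" .
qed simp

definition concat_vec :: "nat \<Rightarrow> nat \<Rightarrow> (nat \<Rightarrow> int) \<Rightarrow> (nat \<Rightarrow> int) \<Rightarrow> nat \<Rightarrow> int" where
  "concat_vec s n p q = (\<lambda>i. if i < n then if i < s then p (Suc i) else q (i - s) else 0)"

lemma concat_vec_shift [simp]: "j < n - s \<Longrightarrow> concat_vec s n p q (s + j) = q j"
  by (auto simp: concat_vec_def)

lemma supp_in_concat_vec: "supp_in n (concat_vec s n p q)"
  by (simp add: supp_in_def concat_vec_def)

lemma inj_on_concat_vec: "inj_on (\<lambda>q. concat_vec s n (P q) q) {q. supp_in (n - s) q}"
proof (rule inj_onI)
  fix a b :: "nat \<Rightarrow> int"
  assume supp: "a \<in> {q. supp_in (n - s) q}" "b \<in> {q. supp_in (n - s) q}"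
    and eq: "concat_vec s n (P a) a = concat_vec s n (P b) b"
  show "a = b"
  proof
    fix j
    show "a j = b j"
    proof (cases "j < n - s")
      case True
      then show ?thesis using fun_cong[OF eq, of "s + j"] by simp
    next
      case False
      then show ?thesis using supp by (simp add: supp_in_def)
    qed
  qed
qed

lemma dotp_concat_vec:
  fixes p q :: "nat \<Rightarrow> int"
  assumes "s < n"
    and y_x: "\<forall>i<s. y i = x i"
    and y_xA: "\<forall>j<n - s. y (s + j) = A 0 j + (\<Sum>i<s. x i * A (i + 1) j)"
  defines "e \<equiv> \<lambda>i. matvec s n A q i + real_of_int (p i)"
  shows "dotp n y (concat_vec s n p q) + real_of_int (p 0) = e 0 + (\<Sum>i<s. x i * e (Suc i))"
proof -
  have split: "(\<Sum>i<n. g i) = (\<Sum>i<s. g i) + (\<Sum>j<n - s. g (s + j))" for g :: "nat \<Rightarrow> real"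
    using sum_lessThan_add_split[of g s "n - s"] \<open>s < n\<close> by simp
  have "dotp n y (concat_vec s n p q)
      = (\<Sum>i<s. y i * concat_vec s n p q i) + (\<Sum>j<n - s. y (s + j) * q j)"
    unfolding dotp_def split by simp
  also have "(\<Sum>i<s. y i * concat_vec s n p q i) = (\<Sum>i<s. x i * p (Suc i))"
    using y_x \<open>s < n\<close> by (intro sum.cong) (auto simp: concat_vec_def)
  also have "(\<Sum>j<n - s. y (s + j) * q j)
      = (\<Sum>j<n - s. A 0 j * q j) + (\<Sum>j<n - s. \<Sum>i<s. x i * A (Suc i) j * q j)"
    using y_xA by (simp add: distrib_right sum.distrib sum_distrib_right)
  also have "(\<Sum>j<n - s. \<Sum>i<s. x i * A (Suc i) j * q j) = (\<Sum>i<s. \<Sum>j<n - s. x i * A (Suc i) j * q j)"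
    by (rule sum.swap)
  finally show ?thesis
    unfolding e_def matvec_def by (simp add: sum.distrib algebra_simps sum_distrib_left)
qed

lemma supnorm_le_supnorm_concat_vec:
  assumes "s < n"
  shows "supnorm (n - s) (\<lambda>j. real_of_int (q j))
    \<le> supnorm n (\<lambda>i. real_of_int (concat_vec s n p q i))"
proof (rule supnorm_le)
  fix j assume "j < n - s"
  then show "\<bar>real_of_int (q j)\<bar> \<le> supnorm n (\<lambda>i. real_of_int (concat_vec s n p q i))"
    using abs_le_supnorm[of "s + j" n "\<lambda>i. real_of_int (concat_vec s n p q i)"] by simp
qed (use assms in simp)

lemma supnorm_concat_vec_le:
  fixes p q :: "nat \<Rightarrow> int"
  assumes "s < n"
    and err: "supnorm (s + 1) (\<lambda>i. matvec s n A q i + real_of_int (p i)) \<le> 1"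
    and q_ge: "1 \<le> supnorm (n - s) (\<lambda>j. real_of_int (q j))"
  shows "supnorm n (\<lambda>i. real_of_int (concat_vec s n p q i))
    \<le> (1 + (\<Sum>i<s. \<Sum>j<n - s. \<bar>A (Suc i) j\<bar>)) * supnorm (n - s) (\<lambda>j. real_of_int (q j))"
    (is "_ \<le> (1 + ?\<Sigma>) * ?N")
proof (rule supnorm_le)
  fix i assume "i < n"
  show "\<bar>real_of_int (concat_vec s n p q i)\<bar> \<le> (1 + ?\<Sigma>) * ?N"
  proof (cases "i < s")
    case True
    have row: "(\<Sum>j<n - s. \<bar>A (Suc i) j\<bar>) \<le> ?\<Sigma>"
      using True by (intro member_le_sum) (auto intro: sum_nonneg)
    have "\<bar>real_of_int (p (Suc i))\<bar>
        \<le> \<bar>matvec s n A q (Suc i) + real_of_int (p (Suc i))\<bar> + \<bar>matvec s n A q (Suc i)\<bar>"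
      by linarith
    also have "\<dots> \<le> 1 + ?\<Sigma> * ?N"
    proof (rule add_mono)
      show "\<bar>matvec s n A q (Suc i) + real_of_int (p (Suc i))\<bar> \<le> 1"
        using abs_le_supnorm[of "Suc i" "s + 1" "\<lambda>i. matvec s n A q i + real_of_int (p i)"] err True
        by simp
      show "\<bar>matvec s n A q (Suc i)\<bar> \<le> ?\<Sigma> * ?N"
        using q_ge by (intro order_trans[OF abs_matvec_le[of s n A q "Suc i"] mult_right_mono[OF row]]) simp
    qed
    also have "\<dots> \<le> (1 + ?\<Sigma>) * ?N"
      using q_ge by (simp add: algebra_simps)
    finally show ?thesis using True \<open>i < n\<close> by (simp add: concat_vec_def)
  next
    case False
    have "\<bar>real_of_int (q (i - s))\<bar> \<le> ?N"
      using False \<open>i < n\<close> by (intro abs_le_supnorm) simp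
    also have "\<dots> \<le> (1 + ?\<Sigma>) * ?N"
      using q_ge by (simp add: sum_nonneg)
    finally show ?thesis using False \<open>i < n\<close> by (simp add: concat_vec_def)
  qed
qed (use assms in simp)

lemma abs_dotp_concat_vec_less:
  fixes p q :: "nat \<Rightarrow> int" and x y :: "nat \<Rightarrow> real"
  assumes "s < n" "0 < u"
    and y_x: "\<forall>i<s. y i = x i"
    and y_xA: "\<forall>j<n - s. y (s + j) = A 0 j + (\<Sum>i<s. x i * A (i + 1) j)"
  defines "N \<equiv> supnorm (n - s) (\<lambda>j. real_of_int (q j))"
    and "K \<equiv> 1 + (\<Sum>i<s. \<Sum>j<n - s. \<bar>A (Suc i) j\<bar>)"
  assumes approx: "supnorm (s + 1) (\<lambda>i. matvec s n A q i + real_of_int (p i)) < N powr - u"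
    and N_ge: "1 \<le> N"
    and large: "(1 + (\<Sum>i<s. \<bar>x i\<bar>)) * K powr \<bar>v\<bar> \<le> N powr (u - v)"
  shows "\<bar>dotp n y (concat_vec s n p q) + real_of_int (p 0)\<bar>
    < supnorm n (\<lambda>i. real_of_int (concat_vec s n p q i)) powr - v"
proof -
  define e where "e = (\<lambda>i. matvec s n A q i + real_of_int (p i))"
  define C where "C = 1 + (\<Sum>i<s. \<bar>x i\<bar>)"
  define M where "M = supnorm n (\<lambda>i. real_of_int (concat_vec s n p q i))"
  have K_ge: "1 \<le> K" and C_ge: "1 \<le> C"
    unfolding K_def C_def by (simp_all add: sum_nonneg)
  have "N powr - u \<le> 1"
    using powr_mono[of "- u" 0 N] N_ge \<open>0 < u\<close> by simp
  then have e_le: "supnorm (s + 1) e \<le> 1"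
    using approx unfolding e_def by simp
  have N_le_M: "N \<le> M"
    unfolding N_def M_def using \<open>s < n\<close> by (rule supnorm_le_supnorm_concat_vec)
  have M_le: "M \<le> K * N"
    unfolding M_def K_def N_def
    using supnorm_concat_vec_le[OF \<open>s < n\<close> e_le[unfolded e_def]] N_ge N_def by simp
  have "\<bar>dotp n y (concat_vec s n p q) + real_of_int (p 0)\<bar> = \<bar>e 0 + (\<Sum>i<s. x i * e (Suc i))\<bar>"
    using dotp_concat_vec[OF \<open>s < n\<close> y_x y_xA] unfolding e_def by simp
  also have "\<dots> \<le> C * supnorm (s + 1) e"
    unfolding C_def by (rule abs_affine_le_supnorm)
  also have "\<dots> < C * N powr - u"
    using approx C_ge unfolding e_def by simp
  also have "\<dots> \<le> M powr - v"
    using K_ge N_ge N_le_M M_le large unfolding C_def by (intro mult_powr_neg_le_between) auto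
  finally show ?thesis
    unfolding M_def .
qed

lemma less_omega_obtains_approximations:
  assumes "ereal v < omega s n A"
  obtains u S and P :: "(nat \<Rightarrow> int) \<Rightarrow> nat \<Rightarrow> int"
  where "0 < u" "v < u" "infinite S" "S \<subseteq> {q. supp_in (n - s) q}"
    "\<And>q. q \<in> S \<Longrightarrow> supnorm (s + 1) (\<lambda>i. matvec s n A q i + real_of_int (P q i))
      < supnorm (n - s) (\<lambda>j. real_of_int (q j)) powr - u"
proof -
  obtain u where "0 < u" "v < u" and inf: "infinite {q. supp_in (n - s) q \<and>
       (\<exists>p. supp_in (s + 1) p \<and> supnorm (s + 1) (\<lambda>i. matvec s n A q i + real_of_int (p i))
          < supnorm (n - s) (\<lambda>j. real_of_int (q j)) powr - u)}" (is "infinite ?S")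
    using assms unfolding omega_def less_Sup_iff by auto
  have "\<forall>q\<in>?S. \<exists>p. supnorm (s + 1) (\<lambda>i. matvec s n A q i + real_of_int (p i))
      < supnorm (n - s) (\<lambda>j. real_of_int (q j)) powr - u"
    by blast
  then obtain P where "\<forall>q\<in>?S. supnorm (s + 1) (\<lambda>i. matvec s n A q i + real_of_int (P q i))
      < supnorm (n - s) (\<lambda>j. real_of_int (q j)) powr - u"
    by (rule bchoice[elim_format]) blast
  with \<open>0 < u\<close> \<open>v < u\<close> inf show thesis
    by (intro that[of u ?S P]) auto
qed

lemma finite_not_approximating:
  fixes P :: "(nat \<Rightarrow> int) \<Rightarrow> nat \<Rightarrow> int"
  assumes "s < n" "0 < u" "v < u"
    and S_supp: "S \<subseteq> {q. supp_in (n - s) q}"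
    and approx: "\<And>q. q \<in> S \<Longrightarrow> supnorm (s + 1) (\<lambda>i. matvec s n A q i + real_of_int (P q i))
      < supnorm (n - s) (\<lambda>j. real_of_int (q j)) powr - u"
    and "y \<in> Lspace s n A"
  shows "finite {(p, Q) \<in> (\<lambda>q. (P q 0, concat_vec s n (P q) q)) ` S.
    \<not> (\<bar>dotp n y Q + real_of_int p\<bar> < supnorm n (\<lambda>i. real_of_int (Q i)) powr - v)}"
    (is "finite ?bad")
proof -
  obtain x where y_x: "\<forall>i<s. y i = x i"
    and y_xA: "\<forall>j<n - s. y (s + j) = A 0 j + (\<Sum>i<s. x i * A (i + 1) j)"
    using \<open>y \<in> Lspace s n A\<close> unfolding Lspace_def by auto
  obtain R where "1 \<le> R" and R: "\<forall>N\<ge>R. (1 + (\<Sum>i<s. \<bar>x i\<bar>))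
      * (1 + (\<Sum>i<s. \<Sum>j<n - s. \<bar>A (Suc i) j\<bar>)) powr \<bar>v\<bar> \<le> N powr (u - v)"
    using ex_threshold_le_powr[of "u - v"] \<open>v < u\<close> by auto
  have "?bad \<subseteq> (\<lambda>q. (P q 0, concat_vec s n (P q) q)) `
      {q. supp_in (n - s) q \<and> supnorm (n - s) (\<lambda>j. real_of_int (q j)) \<le> R}"
  proof
    fix z assume "z \<in> ?bad"
    then obtain q where "q \<in> S" and z: "z = (P q 0, concat_vec s n (P q) q)"
      and bad: "\<not> (\<bar>dotp n y (concat_vec s n (P q) q) + real_of_int (P q 0)\<bar>
        < supnorm n (\<lambda>i. real_of_int (concat_vec s n (P q) q i)) powr - v)"
      by force
    have "supnorm (n - s) (\<lambda>j. real_of_int (q j)) \<le> R"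
    proof (rule ccontr)
      assume "\<not> ?thesis"
      then have "R \<le> supnorm (n - s) (\<lambda>j. real_of_int (q j))" by simp
      then show False
        using bad abs_dotp_concat_vec_less[OF \<open>s < n\<close> \<open>0 < u\<close> y_x y_xA approx[OF \<open>q \<in> S\<close>]]
          R \<open>1 \<le> R\<close> by auto
    qed
    with \<open>q \<in> S\<close> S_supp show "z \<in> (\<lambda>q. (P q 0, concat_vec s n (P q) q)) `
        {q. supp_in (n - s) q \<and> supnorm (n - s) (\<lambda>j. real_of_int (q j)) \<le> R}"
      unfolding z by blast
  qed
  then show ?thesis
    by (rule finite_subset) (intro finite_imageI finite_supp_in_supnorm_le)
qed

theorem lemma5p4:
  fixes s n :: nat and A :: "nat \<Rightarrow> nat \<Rightarrow> real" and v :: real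
  assumes "s < n"
    and "ereal v < omega s n A"
  shows "\<exists>\<A> :: (int \<times> (nat \<Rightarrow> int)) set.
           infinite \<A> \<and> (\<forall>(p, q)\<in>\<A>. supp_in n q) \<and>
           (\<forall>y\<in>Lspace s n A.
              finite {(p, q) \<in> \<A>. \<not> (\<bar>dotp n y q + real_of_int p\<bar>
                  < supnorm n (\<lambda>i. real_of_int (q i)) powr (- v))})"
proof -
  obtain u S and P :: "(nat \<Rightarrow> int) \<Rightarrow> nat \<Rightarrow> int"
    where u: "0 < u" "v < u" and "infinite S" and S_supp: "S \<subseteq> {q. supp_in (n - s) q}"
      and approx: "\<And>q. q \<in> S \<Longrightarrow> supnorm (s + 1) (\<lambda>i. matvec s n A q i + real_of_int (P q i))
        < supnorm (n - s) (\<lambda>j. real_of_int (q j)) powr - u"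
    using less_omega_obtains_approximations[OF assms(2)] by blast
  let ?F = "\<lambda>q. (P q 0, concat_vec s n (P q) q)"
  have "inj_on ?F S"
    using inj_on_subset[OF inj_on_concat_vec S_supp] unfolding inj_on_def by blast
  show ?thesis
  proof (intro exI[of _ "?F ` S"] conjI ballI)
    show "infinite (?F ` S)"
      using \<open>infinite S\<close> \<open>inj_on ?F S\<close> by (simp add: finite_image_iff)
    show "case z of (p, q) \<Rightarrow> supp_in n q" if "z \<in> ?F ` S" for z
      using that by (auto simp: supp_in_concat_vec)
  next
    fix y assume "y \<in> Lspace s n A"
    with \<open>s < n\<close> u S_supp approx show "finite {(p, q) \<in> ?F ` S. \<not> (\<bar>dotp n y q + real_of_int p\<bar>
        < supnorm n (\<lambda>i. real_of_int (q i)) powr - v)}"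
      by (rule finite_not_approximating)
  qed
qed

end
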